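(* Let $\mathcal F$ be a field and let $p\in\mathbb N$. Let $\mathbf{Mat}_{\mathcal F}$ be the category whose objects are natural numbers, whose arrows $M\colon m\to n$ are $n\times m$ matrices with entries in $\mathcal F$, and whose composition is matrix multiplication. Let $F\colon \mathbf{Mat}_{\mathcal F}\to\mathbf{Mat}_{\mathcal F}$ be the functor with $F(n)=p\cdot n$ on objects and $F(M)=I_p\otimes M$ (Kronecker product with the $p\times p$ identity matrix) on arrows. Then there exist families of matrices $\varphi=(\varphi_n\colon p^2n\to n)_{n}$, $\gamma=(\gamma_n\colon n\to p^2n)_n$ and $\chi=(\chi_n\colon p^2n\to p^2n)_n$ such that $\langle \mathbf{Mat}_{\mathcal F},F,\varphi,\gamma,\chi\rangle$ is a symmetric self-adjunction.
   Context: A symmetric self-adjunction is a quintuple $\langle\mathcal A,F,\varphi,\gamma,\chi\rangle$ where $\mathcal A$ is a category, $F\colon\mathcal A\to\mathcal A$ is a functor, and $\varphi\colon FF\to 1_{\mathcal A}$, $\gamma\colon 1_{\mathcal A}\to FF$, $\chi\colon FF\to FF$ are natural transformations such that for all objects $A$: $\varphi_{FA}\circ F\gamma_A=1_{FA}$ and $F\varphi_A\circ\gamma_{FA}=1_{FA}$ (triangular equations, i.e. $F$ is adjoint to itself with counit $\varphi$ and unit $\gamma$); $\chi_A\circ\chi_A=1_{FFA}$; $\chi_{FA}\circ F\chi_A\circ\chi_{FA}=F\chi_A\circ\chi_{FA}\circ F\chi_A$; $\varphi_A\circ\chi_A=\varphi_A$; $\chi_A\circ\gamma_A=\gamma_A$;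 $\varphi_{FA}\circ F\chi_A=F\varphi_A\circ\chi_{FA}$; $\chi_{FA}\circ F\gamma_A=F\chi_A\circ\gamma_{FA}$. *)

theory Defs
  imports "Jordan_Normal_Form.Matrix"
begin

definition kron :: "'a::times mat \<Rightarrow> 'a mat \<Rightarrow> 'a mat" where
  "kron A B = mat (dim_row A * dim_row B) (dim_col A * dim_col B)
     (\<lambda>(i, j). A $$ (i div dim_row B, j div dim_col B) * B $$ (i mod dim_row B, j mod dim_col B))"

text \<open>A category given by objects Ob, hom-sets Hom x y (arrows x -> y),
  composition cmp g f (= g o f, f first) and identities Idt.\<close>
definition sym_self_adj ::
  "'o set \<Rightarrow> ('o \<Rightarrow> 'o \<Rightarrow> 'm set) \<Rightarrow> ('m \<Rightarrow> 'm \<Rightarrow> 'm) \<Rightarrow> ('o \<Rightarrow> 'm)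
   \<Rightarrow> ('o \<Rightarrow> 'o) \<Rightarrow> ('m \<Rightarrow> 'm)
   \<Rightarrow> ('o \<Rightarrow> 'm) \<Rightarrow> ('o \<Rightarrow> 'm) \<Rightarrow> ('o \<Rightarrow> 'm) \<Rightarrow> bool" where
  "sym_self_adj Ob Hom cmp Idt Fo Fa \<phi> \<gamma> \<chi> \<longleftrightarrow>
    \<comment> \<open>F is a functor\<close>
    (\<forall>x\<in>Ob. Fo x \<in> Ob) \<and>
    (\<forall>x\<in>Ob. \<forall>y\<in>Ob. \<forall>f\<in>Hom x y. Fa f \<in> Hom (Fo x) (Fo y)) \<and>
    (\<forall>x\<in>Ob. Fa (Idt x) = Idt (Fo x)) \<and>
    (\<forall>x\<in>Ob. \<forall>y\<in>Ob. \<forall>z\<in>Ob. \<forall>f\<in>Hom x y. \<forall>g\<in>Hom y z.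
        Fa (cmp g f) = cmp (Fa g) (Fa f)) \<and>
    \<comment> \<open>components of phi : FF -> 1, gamma : 1 -> FF, chi : FF -> FF\<close>
    (\<forall>x\<in>Ob. \<phi> x \<in> Hom (Fo (Fo x)) x) \<and>
    (\<forall>x\<in>Ob. \<gamma> x \<in> Hom x (Fo (Fo x))) \<and>
    (\<forall>x\<in>Ob. \<chi> x \<in> Hom (Fo (Fo x)) (Fo (Fo x))) \<and>
    \<comment> \<open>naturality\<close>
    (\<forall>x\<in>Ob. \<forall>y\<in>Ob. \<forall>f\<in>Hom x y.
        cmp (\<phi> y) (Fa (Fa f)) = cmp f (\<phi> x) \<and>
        cmp (\<gamma> y) f = cmp (Fa (Fa f)) (\<gamma> x) \<and>
        cmp (\<chi> y) (Fa (Fa f)) = cmp (Fa (Fa f)) (\<chi> x)) \<and>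
    \<comment> \<open>the equations\<close>
    (\<forall>x\<in>Ob.
        cmp (\<phi> (Fo x)) (Fa (\<gamma> x)) = Idt (Fo x) \<and>
        cmp (Fa (\<phi> x)) (\<gamma> (Fo x)) = Idt (Fo x) \<and>
        cmp (\<chi> x) (\<chi> x) = Idt (Fo (Fo x)) \<and>
        cmp (\<chi> (Fo x)) (cmp (Fa (\<chi> x)) (\<chi> (Fo x))) =
          cmp (Fa (\<chi> x)) (cmp (\<chi> (Fo x)) (Fa (\<chi> x))) \<and>
        cmp (\<phi> x) (\<chi> x) = \<phi> x \<and>
        cmp (\<chi> x) (\<gamma> x) = \<gamma> x \<and>
        cmp (\<phi> (Fo x)) (Fa (\<chi> x)) = cmp (Fa (\<phi> x)) (\<chi> (Fo x)) \<and>
        cmp (\<chi> (Fo x)) (Fa (\<gamma> x)) = cmp (Fa (\<chi> x)) (\<gamma> (Fo x)))"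

definition Mat_hom :: "nat \<Rightarrow> nat \<Rightarrow> 'a::semiring_1 mat set" where
  "Mat_hom m n = carrier_mat n m"

end

theory Submission
  imports Defs
begin

(* On arrows F tensors with I_p, so F is tensoring with a p-dimensional space V over the field
   K, and F (F M) = I_(p*p) \<otimes> M.  The self-duality of V supplies the evaluation
   V \<otimes> V \<rightarrow> K, the coevaluation K \<rightarrow> V \<otimes> V and the swap of V \<otimes> V, as matrices of sizes
   1 x p^2, p^2 x 1 and p^2 x p^2; tensoring them with I_n gives \<phi>_n, \<gamma>_n and \<chi>_n.
   Naturality is the interchange law of the Kronecker product, and by its mixed-product and
   associativity laws every other equation reduces to the same equation between these small
   matrices (zig-zag identities, involutivity of the swap, the braid relation, compatibility of
   the swap with evaluation and coevaluation), which is checked entrywise. *)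

lemma sum_lessThan_mult_nat:
  "(\<Sum>k<m * n. g k) = (\<Sum>a<m. \<Sum>c<n. g (a * n + c :: nat))"
  by (simp flip: sum.nat_group add: sum.shift_bounds_nat_ivl[of g 0 _ n, simplified]
      atLeast0LessThan add.commute)

lemma less_mult_natE:
  assumes "i < m * (n::nat)"
  obtains a c where "a < m" "c < n" "i = a * n + c"
proof
  from assms have "n > 0" by (auto intro: gr0I)
  with assms show "i div n < m" "i mod n < n" by (simp_all add: less_mult_imp_div_less)
qed simp

lemma mult_add_less_nat [simp]: "b < m \<Longrightarrow> c < n \<Longrightarrow> b * n + c < m * (n::nat)"
proof -
  assume "b < m" "c < n"
  then have "b * n + c < Suc b * n" by simp
  also have "\<dots> \<le> m * n" using \<open>b < m\<close> by (intro mult_le_mono1) simp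
  finally show ?thesis .
qed

lemma mod_mult_div_nat: "(i::nat) mod (n * m) div n = i div n mod m"
  by (cases "n = 0") (simp_all add: mod_mult2_eq)

lemma dim_kron [simp]:
  "dim_row (kron A B) = dim_row A * dim_row B"
  "dim_col (kron A B) = dim_col A * dim_col B"
  by (simp_all add: kron_def)

lemma index_kron [simp]:
  "i < dim_row A * dim_row B \<Longrightarrow> j < dim_col A * dim_col B \<Longrightarrow>
   kron A B $$ (i, j) =
     A $$ (i div dim_row B, j div dim_col B) * B $$ (i mod dim_row B, j mod dim_col B)"
  by (simp add: kron_def)

lemma kron_mult:
  fixes A B C D :: "'a::comm_semiring_0 mat"
  assumes "dim_col A = dim_row C" and "dim_col B = dim_row D"
  shows "kron A B * kron C D = kron (A * C) (B * D)"
proof (rule eq_matI)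
  fix i j
  assume i: "i < dim_row (kron (A * C) (B * D))" and j: "j < dim_col (kron (A * C) (B * D))"
  have "dim_row B > 0" "dim_col D > 0" using i j by (auto intro: gr0I)
  then have "i div dim_row B < dim_row A" "i mod dim_row B < dim_row B"
    and "j div dim_col D < dim_col C" "j mod dim_col D < dim_col D"
    using i j by (auto simp: less_mult_imp_div_less)
  moreover have "(kron A B * kron C D) $$ (i, j) =
    (\<Sum>a<dim_col A. \<Sum>c<dim_col B. (A $$ (i div dim_row B, a) * C $$ (a, j div dim_col D)) *
                                   (B $$ (i mod dim_row B, c) * D $$ (c, j mod dim_col D)))"
    using i j assms by (simp add: scalar_prod_def atLeast0LessThan sum_lessThan_mult_nat ac_simps)
  ultimately show "(kron A B * kron C D) $$ (i, j) = kron (A * C) (B * D) $$ (i, j)"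
    using i j assms by (simp add: scalar_prod_def atLeast0LessThan sum_product)
qed (simp_all add: assms)

lemma kron_assoc:
  fixes A B C :: "'a::semigroup_mult mat"
  shows "kron (kron A B) C = kron A (kron B C)"
proof (rule eq_matI)
  fix i j
  assume i: "i < dim_row (kron A (kron B C))" and j: "j < dim_col (kron A (kron B C))"
  then have "i div dim_row C < dim_row A * dim_row B" "j div dim_col C < dim_col A * dim_col B"
    by (simp_all add: less_mult_imp_div_less mult.assoc)
  moreover have "i mod (dim_row B * dim_row C) < dim_row B * dim_row C"
    "j mod (dim_col B * dim_col C) < dim_col B * dim_col C"
    using i j by (auto intro!: mod_less_divisor gr0I)
  ultimately show "kron (kron A B) C $$ (i, j) = kron A (kron B C) $$ (i, j)"
    using i j by (simp add: div_mult2_eq mod_mult_div_nat mod_mod_cancel mult.assoc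
        mult.commute[of "dim_row B"] mult.commute[of "dim_col B"])
qed (simp_all add: mult.assoc)

lemma kron_one_mat: "kron (1\<^sub>m m) (1\<^sub>m n) = (1\<^sub>m (m * n) :: 'a::semiring_1 mat)"
proof (rule eq_matI)
  fix i j
  assume "i < dim_row (1\<^sub>m (m * n) :: 'a mat)" "j < dim_col (1\<^sub>m (m * n) :: 'a mat)"
  moreover from this have "n > 0" by (auto intro: gr0I)
  ultimately show "kron (1\<^sub>m m) (1\<^sub>m n) $$ (i, j) = (1\<^sub>m (m * n) :: 'a mat) $$ (i, j)"
    by (auto simp: less_mult_imp_div_less) (metis div_mult_mod_eq)
qed simp_all

lemma kron_one_mat_1_left: "kron (1\<^sub>m 1) A = (A :: 'a::semiring_1 mat)"
  by (rule eq_matI) simp_all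

lemma kron_one_mat_split:
  "kron S (1\<^sub>m (m * n)) = kron (kron S (1\<^sub>m m)) (1\<^sub>m n :: 'a::semiring_1 mat)"
  by (simp add: kron_assoc kron_one_mat)

lemma kron_one_mat_kron_one_mat:
  "kron (1\<^sub>m m) (kron (1\<^sub>m n) A) = kron (1\<^sub>m (m * n)) (A :: 'a::semiring_1 mat)"
  by (simp flip: kron_assoc add: kron_one_mat)

lemma kron_one_mat_mult_distrib:
  fixes f g :: "'a::comm_semiring_1 mat"
  assumes "dim_col g = dim_row f"
  shows "kron (1\<^sub>m p) (g * f) = kron (1\<^sub>m p) g * kron (1\<^sub>m p) f"
  using assms by (simp add: kron_mult)

lemma mult_kron_one_mat:
  fixes X Y :: "'a::comm_semiring_1 mat"
  assumes "dim_col X = dim_row Y"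
  shows "kron X (1\<^sub>m n) * kron Y (1\<^sub>m n) = kron (X * Y) (1\<^sub>m n)"
  using assms by (simp add: kron_mult)

lemma kron_one_mat_natural:
  fixes S f :: "'a::comm_semiring_1 mat"
  assumes "f \<in> carrier_mat n m"
  shows "kron S (1\<^sub>m n) * kron (1\<^sub>m (dim_col S)) f = kron (1\<^sub>m (dim_row S)) f * kron S (1\<^sub>m m)"
  using assms by (simp add: kron_mult)

(* An index k < p * p stands for the pair (k div p, k mod p). *)

definition eval_mat :: "nat \<Rightarrow> 'a::zero_neq_one mat" where
  "eval_mat p = mat 1 (p * p) (\<lambda>(_, k). if k div p = k mod p then 1 else 0)"

definition coeval_mat :: "nat \<Rightarrow> 'a::zero_neq_one mat" where
  "coeval_mat p = mat (p * p) 1 (\<lambda>(k, _). if k div p = k mod p then 1 else 0)"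

definition swap_mat :: "nat \<Rightarrow> 'a::zero_neq_one mat" where
  "swap_mat p = mat (p * p) (p * p) (\<lambda>(k, l). if k div p = l mod p \<and> k mod p = l div p then 1 else 0)"

lemma dim_eval_mat [simp]: "dim_row (eval_mat p) = 1" "dim_col (eval_mat p) = p * p"
  by (simp_all add: eval_mat_def)

lemma dim_coeval_mat [simp]: "dim_row (coeval_mat p) = p * p" "dim_col (coeval_mat p) = 1"
  by (simp_all add: coeval_mat_def)

lemma dim_swap_mat [simp]: "dim_row (swap_mat p) = p * p" "dim_col (swap_mat p) = p * p"
  by (simp_all add: swap_mat_def)

lemma triple_index_eq: "a * (p * p) + (b * p + c) = (a * p + b) * p + (c::nat)"
  by (simp add: algebra_simps)

lemma triple_index_div [simp]: "c < p \<Longrightarrow> (a * (p * p) + (b * p + c)) div p = a * p + (b::nat)"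
  unfolding triple_index_eq by simp

lemma triple_index_mod [simp]: "c < p \<Longrightarrow> (a * (p * p) + (b * p + c)) mod p = (c::nat)"
  unfolding triple_index_eq by simp

lemma if_zero_mult: "(if P then x else 0) * (y::'a::semiring_0) = (if P then x * y else 0)"
  by simp

lemma if_conj_zero: "(if P \<and> Q then x else (0::'a::zero)) = (if P then if Q then x else 0 else 0)"
  by simp

lemma sum_if_zero_const:
  "(\<Sum>x\<in>A. if P then f x else (0::'a::comm_monoid_add)) = (if P then \<Sum>x\<in>A. f x else 0)"
  by simp

(* All indices are split into digits below p; the reversed triple_index_eq brings both
   bracketings of a triple index to the form a * (p * p) + (b * p + c). *)
lemmas small_mat_simps = scalar_prod_def atLeast0LessThan sum_lessThan_mult_nat
  eval_mat_def coeval_mat_def swap_mat_def triple_index_eq[symmetric]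
  if_zero_mult if_conj_zero sum_if_zero_const

lemma eval_coeval_zigzag:
  "kron (eval_mat p) (1\<^sub>m p) * kron (1\<^sub>m p) (coeval_mat p) = (1\<^sub>m p :: 'a::semiring_1 mat)"
  by (rule eq_matI; auto elim!: less_mult_natE simp: small_mat_simps cong: if_cong)

lemma coeval_eval_zigzag:
  "kron (1\<^sub>m p) (eval_mat p) * kron (coeval_mat p) (1\<^sub>m p) = (1\<^sub>m p :: 'a::semiring_1 mat)"
  by (rule eq_matI; auto elim!: less_mult_natE simp: small_mat_simps cong: if_cong)

lemma swap_mat_involutive: "swap_mat p * swap_mat p = (1\<^sub>m (p * p) :: 'a::semiring_1 mat)"
  by (rule eq_matI; auto elim!: less_mult_natE simp: small_mat_simps cong: if_cong)

lemma eval_mat_mult_swap_mat: "eval_mat p * swap_mat p = (eval_mat p :: 'a::semiring_1 mat)"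
  by (rule eq_matI; auto elim!: less_mult_natE simp: small_mat_simps cong: if_cong)

lemma swap_mat_mult_coeval_mat: "swap_mat p * coeval_mat p = (coeval_mat p :: 'a::semiring_1 mat)"
  by (rule eq_matI; auto elim!: less_mult_natE simp: small_mat_simps cong: if_cong)

lemma swap_mat_braid:
  "kron (swap_mat p) (1\<^sub>m p) * (kron (1\<^sub>m p) (swap_mat p) * kron (swap_mat p) (1\<^sub>m p)) =
   (kron (1\<^sub>m p) (swap_mat p) * (kron (swap_mat p) (1\<^sub>m p) * kron (1\<^sub>m p) (swap_mat p))
     :: 'a::semiring_1 mat)"
  by (rule eq_matI; auto elim!: less_mult_natE simp: small_mat_simps cong: if_cong)

lemma eval_mat_swap_mat_slide:
  "kron (eval_mat p) (1\<^sub>m p) * kron (1\<^sub>m p) (swap_mat p) =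
   (kron (1\<^sub>m p) (eval_mat p) * kron (swap_mat p) (1\<^sub>m p) :: 'a::semiring_1 mat)"
  by (rule eq_matI; auto elim!: less_mult_natE simp: small_mat_simps cong: if_cong)

lemma coeval_mat_swap_mat_slide:
  "kron (swap_mat p) (1\<^sub>m p) * kron (1\<^sub>m p) (coeval_mat p) =
   (kron (1\<^sub>m p) (swap_mat p) * kron (coeval_mat p) (1\<^sub>m p) :: 'a::semiring_1 mat)"
  by (rule eq_matI; auto elim!: less_mult_natE simp: small_mat_simps cong: if_cong)

definition counit_mat :: "nat \<Rightarrow> nat \<Rightarrow> 'a::semiring_1 mat" where
  "counit_mat p n = kron (eval_mat p) (1\<^sub>m n)"

definition unit_mat :: "nat \<Rightarrow> nat \<Rightarrow> 'a::semiring_1 mat" where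
  "unit_mat p n = kron (coeval_mat p) (1\<^sub>m n)"

definition symmetry_mat :: "nat \<Rightarrow> nat \<Rightarrow> 'a::semiring_1 mat" where
  "symmetry_mat p n = kron (swap_mat p) (1\<^sub>m n)"

lemma counit_mat_carrier: "counit_mat p n \<in> carrier_mat n (p * (p * n))"
  by (simp add: counit_mat_def carrier_matI mult.assoc)

lemma unit_mat_carrier: "unit_mat p n \<in> carrier_mat (p * (p * n)) n"
  by (simp add: unit_mat_def carrier_matI mult.assoc)

lemma symmetry_mat_carrier: "symmetry_mat p n \<in> carrier_mat (p * (p * n)) (p * (p * n))"
  by (simp add: symmetry_mat_def carrier_matI mult.assoc)

lemma counit_mat_natural:
  fixes f :: "'a::comm_semiring_1 mat"
  assumes "f \<in> carrier_mat n m"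
  shows "counit_mat p n * kron (1\<^sub>m p) (kron (1\<^sub>m p) f) = f * counit_mat p m"
  using kron_one_mat_natural[OF assms, of "eval_mat p"]
  by (simp add: counit_mat_def kron_one_mat_kron_one_mat kron_one_mat_1_left del: One_nat_def)

lemma unit_mat_natural:
  fixes f :: "'a::comm_semiring_1 mat"
  assumes "f \<in> carrier_mat n m"
  shows "unit_mat p n * f = kron (1\<^sub>m p) (kron (1\<^sub>m p) f) * unit_mat p m"
  using kron_one_mat_natural[OF assms, of "coeval_mat p"]
  by (simp add: unit_mat_def kron_one_mat_kron_one_mat kron_one_mat_1_left del: One_nat_def)

lemma symmetry_mat_natural:
  fixes f :: "'a::comm_semiring_1 mat"
  assumes "f \<in> carrier_mat n m"
  shows "symmetry_mat p n * kron (1\<^sub>m p) (kron (1\<^sub>m p) f) =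
         kron (1\<^sub>m p) (kron (1\<^sub>m p) f) * symmetry_mat p m"
  using kron_one_mat_natural[OF assms, of "swap_mat p"]
  by (simp add: symmetry_mat_def kron_one_mat_kron_one_mat)

lemmas kron_one_mat_simps =
  counit_mat_def unit_mat_def symmetry_mat_def
  kron_one_mat_split kron_assoc[symmetric] mult_kron_one_mat kron_one_mat mult.assoc

lemma counit_unit_triangle:
  "counit_mat p (p * n) * kron (1\<^sub>m p) (unit_mat p n) = (1\<^sub>m (p * n) :: 'a::comm_semiring_1 mat)"
  by (simp add: kron_one_mat_simps eval_coeval_zigzag)

lemma unit_counit_triangle:
  "kron (1\<^sub>m p) (counit_mat p n) * unit_mat p (p * n) = (1\<^sub>m (p * n) :: 'a::comm_semiring_1 mat)"
  by (simp add: kron_one_mat_simps coeval_eval_zigzag)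

lemma symmetry_mat_involutive:
  "symmetry_mat p n * symmetry_mat p n = (1\<^sub>m (p * (p * n)) :: 'a::comm_semiring_1 mat)"
  by (simp add: kron_one_mat_simps swap_mat_involutive)

lemma symmetry_mat_braid:
  "symmetry_mat p (p * n) * (kron (1\<^sub>m p) (symmetry_mat p n) * symmetry_mat p (p * n)) =
   (kron (1\<^sub>m p) (symmetry_mat p n) * (symmetry_mat p (p * n) * kron (1\<^sub>m p) (symmetry_mat p n))
     :: 'a::comm_semiring_1 mat)"
  by (simp add: kron_one_mat_simps swap_mat_braid)

lemma counit_mat_mult_symmetry_mat:
  "counit_mat p n * symmetry_mat p n = (counit_mat p n :: 'a::comm_semiring_1 mat)"
  by (simp add: kron_one_mat_simps eval_mat_mult_swap_mat)

lemma symmetry_mat_mult_unit_mat: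
  "symmetry_mat p n * unit_mat p n = (unit_mat p n :: 'a::comm_semiring_1 mat)"
  by (simp add: kron_one_mat_simps swap_mat_mult_coeval_mat)

lemma counit_mat_symmetry_mat_slide:
  "counit_mat p (p * n) * kron (1\<^sub>m p) (symmetry_mat p n) =
   (kron (1\<^sub>m p) (counit_mat p n) * symmetry_mat p (p * n) :: 'a::comm_semiring_1 mat)"
  by (simp add: kron_one_mat_simps eval_mat_swap_mat_slide)

lemma unit_mat_symmetry_mat_slide:
  "symmetry_mat p (p * n) * kron (1\<^sub>m p) (unit_mat p n) =
   (kron (1\<^sub>m p) (symmetry_mat p n) * unit_mat p (p * n) :: 'a::comm_semiring_1 mat)"
  by (simp add: kron_one_mat_simps coeval_mat_swap_mat_slide)

theorem mainTheorem1:
  fixes p :: nat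
  shows "\<exists>(\<phi> :: nat \<Rightarrow> 'a::field mat) \<gamma> \<chi>.
    sym_self_adj (UNIV :: nat set) Mat_hom (\<lambda>g f. g * f) (\<lambda>n. 1\<^sub>m n)
      (\<lambda>n. p * n) (\<lambda>M. kron (1\<^sub>m p) M) \<phi> \<gamma> \<chi>"
proof (intro exI)
  show "sym_self_adj UNIV Mat_hom (\<lambda>g f. g * f) (\<lambda>n. 1\<^sub>m n) (\<lambda>n. p * n) (\<lambda>M. kron (1\<^sub>m p) M)
    (counit_mat p) (unit_mat p) (symmetry_mat p :: nat \<Rightarrow> 'a mat)"
    unfolding sym_self_adj_def Mat_hom_def
    by (auto simp: kron_one_mat kron_one_mat_mult_distrib
        counit_mat_carrier unit_mat_carrier symmetry_mat_carrier
        counit_mat_natural unit_mat_natural symmetry_mat_natural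
        counit_unit_triangle unit_counit_triangle symmetry_mat_involutive symmetry_mat_braid
        counit_mat_mult_symmetry_mat symmetry_mat_mult_unit_mat
        counit_mat_symmetry_mat_slide unit_mat_symmetry_mat_slide)
qed

end
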